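(* Let $g\in\mathcal F$, $h\in[H]$, let $P$ be a probability distribution over $\mathcal F$, and let $G$ be the distribution of the function $g\circ_h f$ when $f\sim P$. Suppose that for constants $C_1,C_2,C_3$: (a) for every $f\in\operatorname{supp}(G)$, $\eta(f,g,h)>\eta(g,g,h)-C_1$; (b) $\Big|\mathbb E_{f\sim G}\mathbb E_{x'\sim\mathcal D_{f,h+1}}[V^{\pi_f}_{h+1}(x')]-\mathbb E_{f\sim G}\mathbb E_{x'\sim\mathcal D_{f,h+1}}[f(x',\pi_f(x'))]\Big|\le C_2$; (c) $\Big|\mathbb E_{x'\sim\mathcal D_{g,h+1}}[V^{\pi_g}_{h+1}(x')]-\mathbb E_{x'\sim\mathcal D_{g,h+1}}[g(x',\pi_g(x'))]\Big|\le C_3$. Then $\mathbb E_{f\sim G}[V^{\pi_f}]\ge V^{\pi_g}-(C_1+C_2+C_3)$.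
   Context: Episodic MDP with layered state space $\mathcal X=\mathcal X_1\cup\dots\cup\mathcal X_H$ (disjoint), finite action set $\mathcal A$, transitions $p(\cdot\mid x,a)$ from $\mathcal X_h$ to $\mathcal X_{h+1}$, (expected) reward $r(x,a)$, deterministic initial state $x_1\in\mathcal X_1$. $\mathcal F$ is a finite class of functions $\mathcal X\times\mathcal A\to[0,1]$. For any function $f:\mathcal X\times\mathcal A\to\mathbb R$, $\pi_f(x)=\arg\max_a f(x,a)$; $\mathcal D_{f,h}$ is the distribution of $x_h$ when $\pi_f$ is run from $x_1$; $V^\pi_h(x)$ is the expected reward-to-go from $x\in\mathcal X_h$ under $\pi$ (with $V^\pi_{H+1}\equiv0$ and all functions vanishing at layer $H+1$), and $V^\pi=V^\pi_1(x_1)$. Concatenation: $(f_1\circ_h f_2)(x,a)=f_1(x,a)$ if $x\in\mathcal X_1\cup\dots\cup\mathcal X_{h-1}$ and $=f_2(x,a)$ otherwise. Predicted performance: $\eta(f,g,h)=\mathbb E_{x\sim\mathcal D_{g,h}}\mathbb E_{x'\sim p(\cdot\mid x,\pi_f(x))}[r(x,\pi_f(x))+f(x',\pi_f(x'))]$. *)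

theory Defs
  imports "HOL-Probability.Probability"
begin

text \<open>States have type 'x, the layer of a state is given by
  a function layer :: 'x => nat (layers 1..H are the real states; a state of layer H+1
  is a terminal state where all functions vanish).\<close>

definition greedy :: "('x \<Rightarrow> 'a::finite \<Rightarrow> real) \<Rightarrow> 'x \<Rightarrow> 'a" where
  "greedy f x = (SOME a. \<forall>b. f x b \<le> f x a)"

definition concat_at :: "('x \<Rightarrow> nat) \<Rightarrow> ('x \<Rightarrow> 'a \<Rightarrow> real) \<Rightarrow> nat \<Rightarrow> ('x \<Rightarrow> 'a \<Rightarrow> real)
    \<Rightarrow> 'x \<Rightarrow> 'a \<Rightarrow> real" where
  "concat_at layer f1 h f2 x a = (if layer x < h then f1 x a else f2 x a)"

fun state_dist :: "('x \<Rightarrow> 'a \<Rightarrow> 'x pmf) \<Rightarrow> 'x \<Rightarrow> ('x \<Rightarrow> 'a) \<Rightarrow> nat \<Rightarrow> 'x pmf" where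
  "state_dist p x1 \<pi> 0 = return_pmf x1"
| "state_dist p x1 \<pi> (Suc k) = bind_pmf (state_dist p x1 \<pi> k) (\<lambda>x. p x (\<pi> x))"

definition D :: "('x \<Rightarrow> 'a \<Rightarrow> 'x pmf) \<Rightarrow> 'x \<Rightarrow> ('x \<Rightarrow> 'a) \<Rightarrow> nat \<Rightarrow> 'x pmf" where
  "D p x1 \<pi> h = state_dist p x1 \<pi> (h - 1)"

text \<open>Expected reward-to-go with k steps remaining; V^pi_h(x) = value_togo ... (H+1-h) x
  for x in layer h (so V^pi_{H+1} = 0).\<close>
fun value_togo :: "('x \<Rightarrow> 'a \<Rightarrow> real) \<Rightarrow> ('x \<Rightarrow> 'a \<Rightarrow> 'x pmf) \<Rightarrow> ('x \<Rightarrow> 'a) \<Rightarrow> nat \<Rightarrow> 'x \<Rightarrow> real" where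
  "value_togo r p \<pi> 0 x = 0"
| "value_togo r p \<pi> (Suc k) x =
     r x (\<pi> x) + measure_pmf.expectation (p x (\<pi> x)) (value_togo r p \<pi> k)"

definition V_h :: "nat \<Rightarrow> ('x \<Rightarrow> 'a \<Rightarrow> real) \<Rightarrow> ('x \<Rightarrow> 'a \<Rightarrow> 'x pmf) \<Rightarrow> ('x \<Rightarrow> 'a) \<Rightarrow> nat \<Rightarrow> 'x \<Rightarrow> real" where
  "V_h H r p \<pi> h x = value_togo r p \<pi> (H + 1 - h) x"

definition V :: "nat \<Rightarrow> ('x \<Rightarrow> 'a \<Rightarrow> real) \<Rightarrow> ('x \<Rightarrow> 'a \<Rightarrow> 'x pmf) \<Rightarrow> 'x \<Rightarrow> ('x \<Rightarrow> 'a) \<Rightarrow> real" where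
  "V H r p x1 \<pi> = V_h H r p \<pi> 1 x1"

definition eta :: "('x \<Rightarrow> 'a::finite \<Rightarrow> real) \<Rightarrow> ('x \<Rightarrow> 'a \<Rightarrow> 'x pmf) \<Rightarrow> 'x
    \<Rightarrow> ('x \<Rightarrow> 'a \<Rightarrow> real) \<Rightarrow> ('x \<Rightarrow> 'a \<Rightarrow> real) \<Rightarrow> nat \<Rightarrow> real" where
  "eta r p x1 f g h = measure_pmf.expectation (D p x1 (greedy g) h)
     (\<lambda>x. measure_pmf.expectation (p x (greedy f x))
        (\<lambda>x'. r x (greedy f x) + f x' (greedy f x')))"

end

theory Submission
  imports Defs
begin

text \<open>Performance decomposition: if the greedy policies of f and g agree on the layers below h,
  then V(pi_f) is the sum of the rewards collected by pi_g before layer h, the predicted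
  performance eta(f,g,h), and the error E[V_{h+1} - f] of f as a value estimate at layer h+1.
  Averaging over f ~ G, hypothesis (a) bounds the eta-term and (b) the error term, while (c)
  bounds the error term in the same decomposition for f = g.\<close>

lemma integrable_measure_pmf_bounded:
  fixes f :: "'b \<Rightarrow> real"
  assumes "\<And>x. \<bar>f x\<bar> \<le> B"
  shows "integrable (measure_pmf M) f"
  by (rule measure_pmf.integrable_const_bound[where B = B]) (auto simp: assms)

lemma expectation_abs_le:
  fixes f :: "'b \<Rightarrow> real"
  assumes "\<And>x. \<bar>f x\<bar> \<le> B"
  shows "\<bar>measure_pmf.expectation M f\<bar> \<le> B"
proof -
  have "measure_pmf.expectation M (\<lambda>x. \<bar>f x\<bar>) \<le> B"
    using assms by (intro measure_pmf.integral_le_const integrable_measure_pmf_bounded[of _ B]) auto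
  then show ?thesis
    using integral_abs_bound[of M f] by linarith
qed

lemma expectation_bind_pmf:
  fixes f :: "'b \<Rightarrow> real"
  assumes "\<And>x. \<bar>f x\<bar> \<le> B"
  shows "measure_pmf.expectation (bind_pmf M N) f
           = measure_pmf.expectation M (\<lambda>x. measure_pmf.expectation (N x) f)"
  unfolding measure_pmf_bind
  using assms measurable_measure_pmf[of N]
  by (intro integral_bind[where K = "count_space UNIV" and B = B and B' = 1])
    (auto simp: measure_pmf.emeasure_space_1 measure_pmf.prob_space_axioms
      prob_space_imp_subprob_space measurable_def)

lemma greedy_concat_at_below:
  assumes "layer x < h"
  shows "greedy (concat_at layer g h f) x = greedy g x"
  using assms by (simp add: greedy_def concat_at_def)

lemma value_togo_abs_le:
  assumes "\<And>x a. \<bar>r x a\<bar> \<le> R"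
  shows "\<bar>value_togo r p \<pi> n x\<bar> \<le> real n * R"
proof (induction n arbitrary: x)
  case 0
  then show ?case by simp
next
  case (Suc n)
  have "\<bar>measure_pmf.expectation (p x (\<pi> x)) (value_togo r p \<pi> n)\<bar> \<le> real n * R"
    using Suc.IH by (rule expectation_abs_le)
  then show ?case
    using assms[of x "\<pi> x"] by (simp add: algebra_simps)
qed

lemma value_togo_split:
  assumes r_bounded: "\<And>x a. \<bar>r x a\<bar> \<le> R" and "j \<le> n"
  shows "value_togo r p \<pi> n x
           = (\<Sum>k<j. measure_pmf.expectation (state_dist p x \<pi> k) (\<lambda>y. r y (\<pi> y)))
             + measure_pmf.expectation (state_dist p x \<pi> j) (value_togo r p \<pi> (n - j))"
  using \<open>j \<le> n\<close>
proof (induction j)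
  case 0
  then show ?case by simp
next
  case (Suc j)
  let ?E = "measure_pmf.expectation" and ?d = "state_dist p x \<pi> j"
  let ?v = "value_togo r p \<pi> (n - Suc j)"
  have n_minus_j: "n - j = Suc (n - Suc j)"
    using Suc.prems by simp
  have r_abs: "\<bar>r y (\<pi> y)\<bar> \<le> R" for y
    using r_bounded .
  have v_abs: "\<bar>?v y\<bar> \<le> real (n - Suc j) * R" for y
    using r_bounded by (rule value_togo_abs_le)
  have Ev_abs: "\<bar>?E (p y (\<pi> y)) ?v\<bar> \<le> real (n - Suc j) * R" for y
    using v_abs by (rule expectation_abs_le)
  have "?E ?d (value_togo r p \<pi> (n - j)) = ?E ?d (\<lambda>y. r y (\<pi> y) + ?E (p y (\<pi> y)) ?v)"
    unfolding n_minus_j by (intro Bochner_Integration.integral_cong) simp_all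
  also have "\<dots> = ?E ?d (\<lambda>y. r y (\<pi> y)) + ?E ?d (\<lambda>y. ?E (p y (\<pi> y)) ?v)"
    by (intro Bochner_Integration.integral_add integrable_measure_pmf_bounded[OF r_abs]
        integrable_measure_pmf_bounded[OF Ev_abs])
  also have "?E ?d (\<lambda>y. ?E (p y (\<pi> y)) ?v) = ?E (state_dist p x \<pi> (Suc j)) ?v"
    by (simp add: expectation_bind_pmf[OF v_abs])
  finally show ?case
    using Suc by simp
qed

lemma V_split:
  assumes "\<And>x a. \<bar>r x a\<bar> \<le> R" and "h \<le> H"
  shows "V H r p x1 \<pi>
           = (\<Sum>k<h. measure_pmf.expectation (state_dist p x1 \<pi> k) (\<lambda>x. r x (\<pi> x)))
             + measure_pmf.expectation (D p x1 \<pi> (h + 1)) (V_h H r p \<pi> (h + 1))"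
proof -
  have "V_h H r p \<pi> (h + 1) = value_togo r p \<pi> (H - h)"
    by (simp add: V_h_def fun_eq_iff)
  then show ?thesis
    using value_togo_split[OF assms, where p = p and \<pi> = \<pi> and x = x1] by (simp add: V_def V_h_def D_def)
qed

text \<open>The states of state_dist p x1 \<pi> k lie in layer k+1, so the sum ranges over layers 1..h-1.\<close>

definition reward_before_layer ::
    "('x \<Rightarrow> 'a \<Rightarrow> real) \<Rightarrow> ('x \<Rightarrow> 'a \<Rightarrow> 'x pmf) \<Rightarrow> 'x \<Rightarrow> ('x \<Rightarrow> 'a) \<Rightarrow> nat \<Rightarrow> real" where
  "reward_before_layer r p x1 \<pi> h =
     (\<Sum>k<h - 1. measure_pmf.expectation (state_dist p x1 \<pi> k) (\<lambda>x. r x (\<pi> x)))"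

definition value_estimate_error :: "nat \<Rightarrow> ('x \<Rightarrow> 'a::finite \<Rightarrow> real) \<Rightarrow> ('x \<Rightarrow> 'a \<Rightarrow> 'x pmf)
    \<Rightarrow> 'x \<Rightarrow> ('x \<Rightarrow> 'a \<Rightarrow> real) \<Rightarrow> nat \<Rightarrow> real" where
  "value_estimate_error H r p x1 f h =
     measure_pmf.expectation (D p x1 (greedy f) (h + 1)) (V_h H r p (greedy f) (h + 1))
     - measure_pmf.expectation (D p x1 (greedy f) (h + 1)) (\<lambda>x'. f x' (greedy f x'))"

locale layered_mdp =
  fixes layer :: "'x \<Rightarrow> nat" and H :: nat and x1 :: 'x and p :: "'x \<Rightarrow> 'a::finite \<Rightarrow> 'x pmf"
  assumes layer_x1: "layer x1 = 1"
    and layer_step: "\<And>x a x'. 1 \<le> layer x \<Longrightarrow> layer x \<le> H \<Longrightarrow> x' \<in> set_pmf (p x a)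
                       \<Longrightarrow> layer x' = layer x + 1"
begin

lemma layer_state_dist:
  assumes "k \<le> H" and "x \<in> set_pmf (state_dist p x1 \<pi> k)"
  shows "layer x = Suc k"
  using assms
proof (induction k arbitrary: x)
  case 0
  then show ?case using layer_x1 by simp
next
  case (Suc k)
  then obtain y where "y \<in> set_pmf (state_dist p x1 \<pi> k)" and "x \<in> set_pmf (p y (\<pi> y))"
    by auto
  with Suc show ?case
    using layer_step[of y x] by simp
qed

lemma state_dist_cong:
  assumes agree: "\<And>x. layer x < h \<Longrightarrow> \<pi>\<^sub>1 x = \<pi>\<^sub>2 x" and "k < h" and "k \<le> H"
  shows "state_dist p x1 \<pi>\<^sub>1 k = state_dist p x1 \<pi>\<^sub>2 k"
  using assms(2,3)
proof (induction k)
  case 0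
  then show ?case by simp
next
  case (Suc k)
  have "\<pi>\<^sub>1 x = \<pi>\<^sub>2 x" if "x \<in> set_pmf (state_dist p x1 \<pi>\<^sub>1 k)" for x
    using agree layer_state_dist[OF _ that] Suc.prems by simp
  then show ?case
    using Suc by (auto intro!: bind_pmf_cong)
qed

lemma expected_reward_cong:
  assumes "\<And>x. layer x < h \<Longrightarrow> \<pi>\<^sub>1 x = \<pi>\<^sub>2 x" and "Suc k < h" and "h \<le> H"
  shows "measure_pmf.expectation (state_dist p x1 \<pi>\<^sub>1 k) (\<lambda>x. r x (\<pi>\<^sub>1 x))
           = measure_pmf.expectation (state_dist p x1 \<pi>\<^sub>2 k) (\<lambda>x. r x (\<pi>\<^sub>2 x))"
proof -
  have "\<pi>\<^sub>1 x = \<pi>\<^sub>2 x" if "x \<in> set_pmf (state_dist p x1 \<pi>\<^sub>1 k)" for x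
    using assms layer_state_dist[OF _ that] by simp
  then show ?thesis
    using assms state_dist_cong[of h \<pi>\<^sub>1 \<pi>\<^sub>2 k]
    by (auto intro!: integral_cong_AE simp: AE_measure_pmf_iff)
qed

lemma eta_eq_if_greedy_agree:
  assumes r_bounded: "\<And>x a. \<bar>r x a\<bar> \<le> R" and f_bounded: "\<And>x a. \<bar>f x a\<bar> \<le> B"
    and agree: "\<And>x. layer x < h \<Longrightarrow> greedy f x = greedy g x"
    and "1 \<le> h" and "h \<le> H"
  shows "eta r p x1 f g h
           = measure_pmf.expectation (state_dist p x1 (greedy f) (h - 1)) (\<lambda>x. r x (greedy f x))
             + measure_pmf.expectation (D p x1 (greedy f) (h + 1)) (\<lambda>x'. f x' (greedy f x'))"
proof -
  let ?E = "measure_pmf.expectation" and ?\<pi> = "greedy f"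
  let ?d = "state_dist p x1 ?\<pi> (h - 1)" and ?f = "\<lambda>x'. f x' (greedy f x')"
  have r_abs: "\<bar>r x (?\<pi> x)\<bar> \<le> R" for x
    using r_bounded .
  have f_abs: "\<bar>?f x'\<bar> \<le> B" for x'
    using f_bounded .
  have Ef_abs: "\<bar>?E (p x (?\<pi> x)) ?f\<bar> \<le> B" for x
    using f_abs by (rule expectation_abs_le)
  have D_next: "D p x1 ?\<pi> (h + 1) = bind_pmf ?d (\<lambda>x. p x (?\<pi> x))"
    using \<open>1 \<le> h\<close> by (cases h) (simp_all add: D_def)
  have "D p x1 (greedy g) h = ?d"
    using assms state_dist_cong[OF agree, where k = "h - 1"] by (simp add: D_def)
  then have "eta r p x1 f g h = ?E ?d (\<lambda>x. ?E (p x (?\<pi> x)) (\<lambda>x'. r x (?\<pi> x) + ?f x'))"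
    by (simp add: eta_def)
  also have "\<dots> = ?E ?d (\<lambda>x. r x (?\<pi> x) + ?E (p x (?\<pi> x)) ?f)"
    by (simp add: Bochner_Integration.integral_add integrable_measure_pmf_bounded[OF f_abs]
        measure_pmf.prob_space)
  also have "\<dots> = ?E ?d (\<lambda>x. r x (?\<pi> x)) + ?E ?d (\<lambda>x. ?E (p x (?\<pi> x)) ?f)"
    by (intro Bochner_Integration.integral_add integrable_measure_pmf_bounded[OF r_abs]
        integrable_measure_pmf_bounded[OF Ef_abs])
  also have "?E ?d (\<lambda>x. ?E (p x (?\<pi> x)) ?f) = ?E (D p x1 ?\<pi> (h + 1)) ?f"
    unfolding D_next by (rule expectation_bind_pmf[OF f_abs, symmetric])
  finally show ?thesis .
qed

lemma V_greedy_decomposition: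
  assumes "\<And>x a. \<bar>r x a\<bar> \<le> R" and "\<And>x a. \<bar>f x a\<bar> \<le> B"
    and agree: "\<And>x. layer x < h \<Longrightarrow> greedy f x = greedy g x"
    and "1 \<le> h" and "h \<le> H"
  shows "V H r p x1 (greedy f)
           = reward_before_layer r p x1 (greedy g) h + eta r p x1 f g h
             + value_estimate_error H r p x1 f h"
proof -
  let ?R = "\<lambda>\<pi> k. measure_pmf.expectation (state_dist p x1 \<pi> k) (\<lambda>x. r x (\<pi> x))"
  have last_step: "(\<Sum>k<h. ?R (greedy f) k) = (\<Sum>k<h - 1. ?R (greedy f) k) + ?R (greedy f) (h - 1)"
    using \<open>1 \<le> h\<close> by (cases h) simp_all
  have prefix: "(\<Sum>k<h - 1. ?R (greedy f) k) = reward_before_layer r p x1 (greedy g) h"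
    unfolding reward_before_layer_def
    using assms by (intro sum.cong expected_reward_cong[OF agree]) auto
  show ?thesis
    using V_split[where r = r and \<pi> = "greedy f", OF assms(1) \<open>h \<le> H\<close>] last_step prefix
      eta_eq_if_greedy_agree[where r = r and f = f, OF assms]
    by (simp add: value_estimate_error_def)
qed

lemma V_greedy_concat_at_decomposition:
  assumes r_bounded: "\<And>x a. \<bar>r x a\<bar> \<le> R"
    and "\<And>x a. \<bar>g x a\<bar> \<le> B" and "\<And>x a. \<bar>f x a\<bar> \<le> B"
    and "1 \<le> h" and "h \<le> H"
  shows "V H r p x1 (greedy (concat_at layer g h f))
           = reward_before_layer r p x1 (greedy g) h + eta r p x1 (concat_at layer g h f) g h
             + value_estimate_error H r p x1 (concat_at layer g h f) h"
proof (rule V_greedy_decomposition[where r = r, OF r_bounded])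
  show "\<bar>concat_at layer g h f x a\<bar> \<le> B" for x a
    using assms by (simp add: concat_at_def)
qed (use assms greedy_concat_at_below in auto)

end

theorem lemma12:
  fixes H :: nat and layer :: "'x \<Rightarrow> nat" and x1 :: 'x
    and p :: "'x \<Rightarrow> 'a::finite \<Rightarrow> 'x pmf" and r :: "'x \<Rightarrow> 'a \<Rightarrow> real"
    and F :: "('x \<Rightarrow> 'a \<Rightarrow> real) set" and g :: "'x \<Rightarrow> 'a \<Rightarrow> real" and h :: nat
    and P :: "('x \<Rightarrow> 'a \<Rightarrow> real) pmf" and C1 C2 C3 :: real
  assumes layer_x1: "layer x1 = 1"
    and layered: "\<And>x a x'. 1 \<le> layer x \<Longrightarrow> layer x \<le> H \<Longrightarrow> x' \<in> set_pmf (p x a)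
                    \<Longrightarrow> layer x' = layer x + 1"
    and r_bounded: "\<And>x a. 0 \<le> r x a \<and> r x a \<le> 1"
    and F_finite: "finite F"
    and F_range: "\<And>f x a. f \<in> F \<Longrightarrow> 0 \<le> f x a \<and> f x a \<le> 1"
    and F_vanish: "\<And>f x a. f \<in> F \<Longrightarrow> layer x = H + 1 \<Longrightarrow> f x a = 0"
    and g_in: "g \<in> F"
    and h_range: "1 \<le> h" "h \<le> H"
    and P_supp: "set_pmf P \<subseteq> F"
    and G_def: "G = map_pmf (\<lambda>f. concat_at layer g h f) P"
    and a: "\<And>f. f \<in> set_pmf G \<Longrightarrow> eta r p x1 f g h > eta r p x1 g g h - C1"
    and b: "\<bar>measure_pmf.expectation G (\<lambda>f. measure_pmf.expectation (D p x1 (greedy f) (h + 1))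
                   (\<lambda>x'. V_h H r p (greedy f) (h + 1) x'))
            - measure_pmf.expectation G (\<lambda>f. measure_pmf.expectation (D p x1 (greedy f) (h + 1))
                   (\<lambda>x'. f x' (greedy f x')))\<bar> \<le> C2"
    and c: "\<bar>measure_pmf.expectation (D p x1 (greedy g) (h + 1)) (\<lambda>x'. V_h H r p (greedy g) (h + 1) x')
            - measure_pmf.expectation (D p x1 (greedy g) (h + 1)) (\<lambda>x'. g x' (greedy g x'))\<bar> \<le> C3"
  shows "measure_pmf.expectation G (\<lambda>f. V H r p x1 (greedy f)) \<ge> V H r p x1 (greedy g) - (C1 + C2 + C3)"
proof -
  interpret layered_mdp layer H x1 p
    using layer_x1 layered by unfold_locales
  let ?E = "measure_pmf.expectation"
  let ?S = "reward_before_layer r p x1 (greedy g) h" and ?err = "\<lambda>f. value_estimate_error H r p x1 f h"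
  have r_abs: "\<bar>r x a\<bar> \<le> 1" and F_abs: "f \<in> F \<Longrightarrow> \<bar>f x a\<bar> \<le> 1" for f x a
    using r_bounded[of x a] F_range[of f x a] by auto
  have decomp_G: "V H r p x1 (greedy f) = ?S + eta r p x1 f g h + ?err f" if "f \<in> set_pmf G" for f
    using that P_supp F_abs g_in unfolding G_def
    by (auto intro!: V_greedy_concat_at_decomposition[where r = r, OF r_abs _ _ h_range])
  have decomp_g: "V H r p x1 (greedy g) = ?S + eta r p x1 g g h + ?err g"
    by (rule V_greedy_decomposition[where r = r and f = g, OF r_abs F_abs[OF g_in] _ h_range]) simp
  have int_G: "integrable (measure_pmf G) u" for u :: "('x \<Rightarrow> 'a \<Rightarrow> real) \<Rightarrow> real"
    using P_supp F_finite unfolding G_def by (auto intro: integrable_measure_pmf_finite finite_subset)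
  have "?E G (\<lambda>f. V H r p x1 (greedy f)) = ?E G (\<lambda>f. ?S + eta r p x1 f g h + ?err f)"
    using decomp_G by (intro integral_cong_AE) (auto simp: AE_measure_pmf_iff)
  also have "\<dots> = ?S + ?E G (\<lambda>f. eta r p x1 f g h) + ?E G ?err"
    by (simp add: Bochner_Integration.integral_add[OF int_G int_G] measure_pmf.prob_space)
  finally have avg: "?E G (\<lambda>f. V H r p x1 (greedy f)) = ?S + ?E G (\<lambda>f. eta r p x1 f g h) + ?E G ?err" .
  have "?E G (\<lambda>f. eta r p x1 f g h) \<ge> eta r p x1 g g h - C1"
    using a by (intro measure_pmf.integral_ge_const[OF int_G]) (auto simp: AE_measure_pmf_iff less_imp_le)
  moreover have "?E G ?err \<ge> - C2"
    using b by (simp add: value_estimate_error_def Bochner_Integration.integral_diff[OF int_G int_G])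
  moreover have "?err g \<le> C3"
    using c by (simp add: value_estimate_error_def)
  ultimately show ?thesis
    using avg decomp_g by linarith
qed

end
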